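(* Let $w\in\Sigma^*$ label a path in the NFA $\mathcal{A}$ from a state $A$ to a state $A'$. Then this path is unique: whenever $w=uv$ and $A\xrightarrow{u}B\xrightarrow{v}A'$ and $A\xrightarrow{u}B'\xrightarrow{v}A'$ in $\mathcal{A}$, we have $B=B'$.
   Context: $\Sigma$ is a finite alphabet with involution $a\mapsto\overline a$ (bijection, $\overline{\overline a}=a$), extended to words by $\overline{a_1\cdots a_m}=\overline{a_m}\cdots\overline{a_1}$. $k\ge1$ is a fixed integer, $[k]=\{0,\dots,k\}$. $\mathcal{A}_1$ is a complete DFA with state set $\mathcal{Q}_1$, initial state $q_{01}$, final states $\mathcal{F}_1$; $\mathcal{A}_2$ is a complete DFA with state set $\mathcal{Q}_2$, initial state $q_{02}$, final states $\mathcal{F}_2$; $p\cdot w$ denotes the state reached from $p$ reading $w$. Let $\mathcal{Q}=\{(q_{01}\cdot w,q_{02}\cdot w): w\in\Sigma^*\}$ and for $P=(p_1,p_2)\in\mathcal{Q}$ put $P\cdot a=(p_1\cdot a,p_2\cdot a)$. A quadruple $(p_1,p_2,q_1,q_2)\in\mathcal{Q}_1\times\mathcal{Q}_2\times\mathcal{Q}_1\times\mathcal{Q}_2$ is a bridge if $B(p_1,p_2,q_1,q_2)=\{\beta: p_1\cdot\beta=q_1,\ p_2\cdot\overline\beta=q_2\}\neq\emptyset$. The NFA $\mathcal{A}$ has state set $\{((p_1,p_2),q_1,q_2,\ell): (p_1,p_2)\in\mathcal{Q},\ q_i\in\mathcal{Q}_i,\ \ell\in[k],\ (p_1,p_2,q_1,q_2)\text{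 a bridge}\}$ and, for $a\in\Sigma$, the following $a$-transitions, present whenever both endpoints are states of $\mathcal{A}$: $(P,q_1\cdot\overline a,q_2\cdot\overline a,0)\xrightarrow{a}(P\cdot a,q_1,q_2,0)$ if $q_1\cdot\overline a\notin\mathcal{F}_1$ and $q_2\cdot\overline a\notin\mathcal{F}_2$; $(P,q_1\cdot\overline a,q_2\cdot\overline a,0)\xrightarrow{a}(P\cdot a,q_1,q_2,1)$ if $q_1\cdot\overline a\in\mathcal{F}_1$ or $q_2\cdot\overline a\in\mathcal{F}_2$; $(P,q_1\cdot\overline a,q_2\cdot\overline a,\ell)\xrightarrow{a}(P\cdot a,q_1,q_2,\ell+1)$ for $1\le\ell<k$. Initial states of $\mathcal{A}$ are the states $((q_{01},q_{02}),q_1',q_2',0)$, final states are the states at level $k$. *)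

theory Defs
  imports Main
begin

definition dstar :: "('s \<Rightarrow> 'a \<Rightarrow> 's) \<Rightarrow> 's \<Rightarrow> 'a list \<Rightarrow> 's" where
  "dstar \<delta> p w = foldl \<delta> p w"

definition wbar :: "('a \<Rightarrow> 'a) \<Rightarrow> 'a list \<Rightarrow> 'a list" where
  "wbar \<iota> w = rev (map \<iota> w)"

definition reachQ :: "('s1 \<Rightarrow> 'a \<Rightarrow> 's1) \<Rightarrow> 's1 \<Rightarrow> ('s2 \<Rightarrow> 'a \<Rightarrow> 's2) \<Rightarrow> 's2 \<Rightarrow> ('s1 \<times> 's2) set" where
  "reachQ \<delta>1 q01 \<delta>2 q02 = {(dstar \<delta>1 q01 w, dstar \<delta>2 q02 w) | w. True}"

definition bridge :: "('a \<Rightarrow> 'a) \<Rightarrow> ('s1 \<Rightarrow> 'a \<Rightarrow> 's1) \<Rightarrow> ('s2 \<Rightarrow> 'a \<Rightarrow> 's2)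
    \<Rightarrow> 's1 \<Rightarrow> 's2 \<Rightarrow> 's1 \<Rightarrow> 's2 \<Rightarrow> bool" where
  "bridge \<iota> \<delta>1 \<delta>2 p1 p2 q1 q2 \<longleftrightarrow> (\<exists>\<beta>. dstar \<delta>1 p1 \<beta> = q1 \<and> dstar \<delta>2 p2 (wbar \<iota> \<beta>) = q2)"

type_synonym ('s1, 's2) nstate = "('s1 \<times> 's2) \<times> 's1 \<times> 's2 \<times> nat"

definition is_nstate :: "('a \<Rightarrow> 'a) \<Rightarrow> nat \<Rightarrow> ('s1 \<Rightarrow> 'a \<Rightarrow> 's1) \<Rightarrow> 's1 \<Rightarrow> ('s2 \<Rightarrow> 'a \<Rightarrow> 's2) \<Rightarrow> 's2
    \<Rightarrow> ('s1, 's2) nstate \<Rightarrow> bool" where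
  "is_nstate \<iota> k \<delta>1 q01 \<delta>2 q02 s \<longleftrightarrow>
     (case s of (P, q1, q2, l) \<Rightarrow>
        P \<in> reachQ \<delta>1 q01 \<delta>2 q02 \<and> l \<le> k \<and> bridge \<iota> \<delta>1 \<delta>2 (fst P) (snd P) q1 q2)"

definition ntrans :: "('a \<Rightarrow> 'a) \<Rightarrow> nat \<Rightarrow> ('s1 \<Rightarrow> 'a \<Rightarrow> 's1) \<Rightarrow> 's1 \<Rightarrow> 's1 set
    \<Rightarrow> ('s2 \<Rightarrow> 'a \<Rightarrow> 's2) \<Rightarrow> 's2 \<Rightarrow> 's2 set
    \<Rightarrow> ('s1, 's2) nstate \<Rightarrow> 'a \<Rightarrow> ('s1, 's2) nstate \<Rightarrow> bool" where
  "ntrans \<iota> k \<delta>1 q01 F1 \<delta>2 q02 F2 s a t \<longleftrightarrow>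
     is_nstate \<iota> k \<delta>1 q01 \<delta>2 q02 s \<and> is_nstate \<iota> k \<delta>1 q01 \<delta>2 q02 t \<and>
     (case s of (P, r1, r2, l) \<Rightarrow> case t of (P', q1, q2, l') \<Rightarrow>
        P' = (\<delta>1 (fst P) a, \<delta>2 (snd P) a) \<and> r1 = \<delta>1 q1 (\<iota> a) \<and> r2 = \<delta>2 q2 (\<iota> a) \<and>
        ((l = 0 \<and> l' = 0 \<and> r1 \<notin> F1 \<and> r2 \<notin> F2) \<or>
         (l = 0 \<and> l' = 1 \<and> (r1 \<in> F1 \<or> r2 \<in> F2)) \<or>
         (1 \<le> l \<and> l < k \<and> l' = l + 1)))"

inductive npath :: "('a \<Rightarrow> 'a) \<Rightarrow> nat \<Rightarrow> ('s1 \<Rightarrow> 'a \<Rightarrow> 's1) \<Rightarrow> 's1 \<Rightarrow> 's1 set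
    \<Rightarrow> ('s2 \<Rightarrow> 'a \<Rightarrow> 's2) \<Rightarrow> 's2 \<Rightarrow> 's2 set
    \<Rightarrow> ('s1, 's2) nstate \<Rightarrow> 'a list \<Rightarrow> ('s1, 's2) nstate \<Rightarrow> bool"
  for \<iota> k \<delta>1 q01 F1 \<delta>2 q02 F2 where
  npath_nil: "is_nstate \<iota> k \<delta>1 q01 \<delta>2 q02 s \<Longrightarrow> npath \<iota> k \<delta>1 q01 F1 \<delta>2 q02 F2 s [] s"
| npath_cons: "ntrans \<iota> k \<delta>1 q01 F1 \<delta>2 q02 F2 s a t \<Longrightarrow> npath \<iota> k \<delta>1 q01 F1 \<delta>2 q02 F2 t w u
     \<Longrightarrow> npath \<iota> k \<delta>1 q01 F1 \<delta>2 q02 F2 s (a # w) u"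

end

theory Submission
  imports Defs
begin

text \<open>A state of \<open>\<A>\<close> is a product state \<open>P\<close> together with a backward part \<open>(q\<^sub>1, q\<^sub>2, \<ell>)\<close>.
  The product state is computed forwards deterministically, so along any path it is fixed by the
  source and the word read so far. The backward part is determined by the target of a
  transition: the source carries \<open>q\<^sub>i \<cdot> \<bar>a\<close>, and the level update \<open>\<ell> \<mapsto> \<ell>'\<close> is injective
  (\<open>\<ell>' = 0\<close> and \<open>\<ell>' = 1\<close> force \<open>\<ell> = 0\<close>, otherwise \<open>\<ell> = \<ell>' - 1\<close>). Hence on \<open>A \<midarrow>u\<rightarrow> B \<midarrow>v\<rightarrow> A'\<close>
  the product part of \<open>B\<close> is fixed by \<open>A\<close> and \<open>u\<close>, and its backward part by \<open>v\<close> and \<open>A'\<close>.\<close>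

lemma npath_fst_target:
  "npath \<iota> k \<delta>1 q01 F1 \<delta>2 q02 F2 s w t \<Longrightarrow>
   fst t = (dstar \<delta>1 (fst (fst s)) w, dstar \<delta>2 (snd (fst s)) w)"
proof (induction rule: npath.induct)
  case (npath_nil s)
  then show ?case by (simp add: dstar_def)
next
  case (npath_cons s a t w u)
  then show ?case by (auto simp: ntrans_def dstar_def split: prod.splits)
qed

lemma ntrans_snd_source_unique:
  assumes "ntrans \<iota> k \<delta>1 q01 F1 \<delta>2 q02 F2 s a t"
    and "ntrans \<iota> k \<delta>1 q01 F1 \<delta>2 q02 F2 s' a t'"
    and "snd t = snd t'"
  shows "snd s = snd s'"
  using assms by (auto simp: ntrans_def split: prod.splits)

lemma npath_snd_source_unique:
  "npath \<iota> k \<delta>1 q01 F1 \<delta>2 q02 F2 s w t \<Longrightarrow>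
   npath \<iota> k \<delta>1 q01 F1 \<delta>2 q02 F2 s' w t \<Longrightarrow> snd s = snd s'"
proof (induction arbitrary: s' rule: npath.induct)
  case (npath_nil s)
  from npath_nil.prems show ?case by (cases rule: npath.cases) auto
next
  case (npath_cons s a t w u)
  from npath_cons.prems obtain t' where
    step: "ntrans \<iota> k \<delta>1 q01 F1 \<delta>2 q02 F2 s' a t'" and
    rest: "npath \<iota> k \<delta>1 q01 F1 \<delta>2 q02 F2 t' w u"
    by (cases rule: npath.cases) auto
  from rest have "snd t = snd t'" by (rule npath_cons.IH)
  with npath_cons.hyps(1) step show ?case by (rule ntrans_snd_source_unique)
qed

theorem lemma4:
  fixes \<iota> :: "'a::finite \<Rightarrow> 'a"
    and k :: nat
    and \<delta>1 :: "'s1::finite \<Rightarrow> 'a \<Rightarrow> 's1" and q01 :: 's1 and F1 :: "'s1 set"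
    and \<delta>2 :: "'s2::finite \<Rightarrow> 'a \<Rightarrow> 's2" and q02 :: 's2 and F2 :: "'s2 set"
    and A A' B B' :: "('s1, 's2) nstate"
    and u v :: "'a list"
  assumes inv: "\<And>a. \<iota> (\<iota> a) = a"
    and k: "k \<ge> 1"
    and path: "npath \<iota> k \<delta>1 q01 F1 \<delta>2 q02 F2 A (u @ v) A'"
    and B1: "npath \<iota> k \<delta>1 q01 F1 \<delta>2 q02 F2 A u B"
    and B2: "npath \<iota> k \<delta>1 q01 F1 \<delta>2 q02 F2 B v A'"
    and B'1: "npath \<iota> k \<delta>1 q01 F1 \<delta>2 q02 F2 A u B'"
    and B'2: "npath \<iota> k \<delta>1 q01 F1 \<delta>2 q02 F2 B' v A'"
  shows "B = B'"
proof (rule prod_eqI)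
  show "fst B = fst B'"
    using npath_fst_target[OF B1] npath_fst_target[OF B'1] by simp
  show "snd B = snd B'"
    using B2 B'2 by (rule npath_snd_source_unique)
qed

end
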